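(* Let $M$ be a Turing machine (bi-infinite tape, symbols $\{0,1,3\}$ with $0$ blank, states $\{0,\dots,|Q|-1\}$) computing a function $f:\Sigma^*\to\Sigma^*$, $\Sigma=\{1,3\}$, in time $T(\ell(\omega))$ on input $\omega$. One can construct a function $\tilde f:\mathbb N\times\mathbb R\to\mathbb R$ in $\mathbb{LDL}^\circ$ such that, for every input $\omega$, $\tilde f(2^{T(\ell(\omega))},\gamma_{word}(\omega))$ provides $f(\omega)$ with respect to the encoding $\gamma_{word}$, i.e. equals $\gamma_{word}(f(\omega))$.
   Context: For a word $w=w_0w_1\dots$ over $\{0,1,3\}$, $\gamma_{word}(w)=\sum_{i\ge0}w_i4^{-(i+1)}$. The input $\omega$ is initially written to the right of the head (left part blank) in the initial state, and the output is read as the tape content to the right of the head; halting configurations are fixed points of the step function. $\ell$ denotes length. $\overline{\mathrm{sg}}:\mathbb R\to\mathbb R$ is a fixed continuous piecewise affine function equal to $1$ for $x>3/4$ and $0$ for $x<1/4$. An $\overline{\mathrm{sg}}$-polynomial expression is built from $+,-,\times,\overline{\mathrm{sg}}$ over variables and integer constants; $\deg(x,x)=1$, $\deg(x,x')=0$ for other variables/constants, $\deg(x,P+Q)=\max$, $\deg(x,P\times Q)=$ sum, $\deg(x,\overline{\mathrm{sg}}(P))=0$; $\mathbf u$ is essentially linear in $\mathbf f$ if $\mathbf u=\mathbf A\cdot\mathbf f+\mathbf B$ with $\mathbf A,\mathbf B$ $\overline{\mathrm{sg}}$-polynomial expressions of degree $0$ in $\mathbf f$. Linear length ODE schema: $\mathbf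 f(0,\mathbf y)=\mathbf g(\mathbf y)$, $\mathbf f(x+1,\mathbf y)=\mathbf f(x,\mathbf y)+(\ell(x+1)-\ell(x))\,\mathbf u(\mathbf f(x,\mathbf y),\mathbf h(x,\mathbf y),x,\mathbf y)$ with $\mathbf u$ essentially linear in $\mathbf f(x,\mathbf y)$, where $\ell:\mathbb N\to\mathbb N$ is binary length. $\mathbb{LDL}^\circ$: smallest class of functions (arguments/values in $\mathbb N,\mathbb Z,\mathbb Q,\mathbb R$, composition partial) containing $0,1$, projections, $\ell$, $+,-,\times$ (over the reals), $\overline{\mathrm{sg}}$, $x\mapsto x/2$, closed under composition and linear length ODE. *)

theory Defs
  imports Complex_Main
begin

datatype move = MLeft | MStay | MRight

text \<open>A configuration: (left tape, state, right tape). The head reads right 0;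
  left 0 is the cell immediately to the left of the head.\<close>
type_synonym config = "(nat \<Rightarrow> nat) \<times> nat \<times> (nat \<Rightarrow> nat)"

text \<open>A machine is given by its number of states nQ (states 0..nQ-1, initial state 0)
  and its transition function delta : state => read symbol => (new state, written symbol, move).\<close>
definition tm_wf :: "nat \<Rightarrow> (nat \<Rightarrow> nat \<Rightarrow> nat \<times> nat \<times> move) \<Rightarrow> bool" where
  "tm_wf nQ delta \<longleftrightarrow> 0 < nQ \<and>
     (\<forall>q<nQ. \<forall>a\<in>{0,1,3}. fst (delta q a) < nQ \<and> fst (snd (delta q a)) \<in> {0,1,3})"

fun tm_step :: "(nat \<Rightarrow> nat \<Rightarrow> nat \<times> nat \<times> move) \<Rightarrow> config \<Rightarrow> config" where
  "tm_step delta (l, q, r) =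
     (case delta q (r 0) of (q', a, m) \<Rightarrow>
        (case m of
           MStay \<Rightarrow> (l, q', r(0 := a))
         | MRight \<Rightarrow> ((\<lambda>i. if i = 0 then a else l (i - 1)), q', (\<lambda>i. r (i + 1)))
         | MLeft \<Rightarrow> ((\<lambda>i. l (i + 1)), q', (\<lambda>i. if i = 0 then l 0 else (r(0 := a)) (i - 1)))))"

definition pad :: "nat list \<Rightarrow> nat \<Rightarrow> nat" where
  "pad w = (\<lambda>i. if i < length w then w ! i else 0)"

definition tm_init :: "nat list \<Rightarrow> config" where
  "tm_init w = ((\<lambda>_. 0), 0, pad w)"

definition is_word :: "nat list \<Rightarrow> bool" where
  "is_word w \<longleftrightarrow> set w \<subseteq> {1, 3}"

text \<open>M computes f in time T(length w): after T(length w) steps from the initial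
  configuration, the configuration is halting (a fixed point of the step function)
  and the tape content to the right of the head is f(w) (followed by blanks).\<close>
definition tm_computes ::
  "(nat \<Rightarrow> nat \<Rightarrow> nat \<times> nat \<times> move) \<Rightarrow> (nat list \<Rightarrow> nat list) \<Rightarrow> (nat \<Rightarrow> nat) \<Rightarrow> bool" where
  "tm_computes delta f T \<longleftrightarrow>
     (\<forall>w. is_word w \<longrightarrow>
        (let c = (tm_step delta ^^ T (length w)) (tm_init w) in
           tm_step delta c = c \<and> snd (snd c) = pad (f w) \<and> is_word (f w)))"

definition gamma_word :: "nat list \<Rightarrow> real" where
  "gamma_word w = (\<Sum>i<length w. real (w ! i) * (1/4) ^ (i + 1))"

text \<open>Binary length (with the convention that 0 is written "0", length 1).\<close>
fun blen :: "nat \<Rightarrow> nat" where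
  "blen n = (if n < 2 then 1 else Suc (blen (n div 2)))"

definition sgbar :: "real \<Rightarrow> real" where
  "sgbar x = min 1 (max 0 (2 * x - 1/2))"

datatype sexpr = SVar nat | SConst int | SAdd sexpr sexpr | SSub sexpr sexpr
  | SMul sexpr sexpr | SSg sexpr

fun seval :: "real list \<Rightarrow> sexpr \<Rightarrow> real" where
  "seval env (SVar i) = env ! i"
| "seval env (SConst c) = real_of_int c"
| "seval env (SAdd p q) = seval env p + seval env q"
| "seval env (SSub p q) = seval env p - seval env q"
| "seval env (SMul p q) = seval env p * seval env q"
| "seval env (SSg p) = sgbar (seval env p)"

fun svars :: "sexpr \<Rightarrow> nat set" where
  "svars (SVar i) = {i}"
| "svars (SConst c) = {}"
| "svars (SAdd p q) = svars p \<union> svars q"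
| "svars (SSub p q) = svars p \<union> svars q"
| "svars (SMul p q) = svars p \<union> svars q"
| "svars (SSg p) = svars p"

fun sdeg :: "nat set \<Rightarrow> sexpr \<Rightarrow> nat" where
  "sdeg F (SVar i) = (if i \<in> F then 1 else 0)"
| "sdeg F (SConst c) = 0"
| "sdeg F (SAdd p q) = max (sdeg F p) (sdeg F q)"
| "sdeg F (SSub p q) = max (sdeg F p) (sdeg F q)"
| "sdeg F (SMul p q) = sdeg F p + sdeg F q"
| "sdeg F (SSg p) = 0"

text \<open>u is essentially linear in the variables 0..<d (standing for f_0..f_(d-1)):
  u = A . f + B with A, B of degree 0 in f.\<close>
definition ess_linear :: "nat \<Rightarrow> sexpr \<Rightarrow> bool" where
  "ess_linear d u \<longleftrightarrow>
     (\<exists>A B. length A = d \<and> (\<forall>a\<in>set A. sdeg {..<d} a = 0) \<and> sdeg {..<d} B = 0 \<and>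
        (\<forall>env. seval env u = (\<Sum>j<d. seval env (A ! j) * env ! j) + seval env B))"

type_synonym pfun = "real list \<Rightarrow> real option"

definition is_nat_real :: "real \<Rightarrow> bool" where
  "is_nat_real x \<longleftrightarrow> x \<in> \<nat>"

text \<open>Vector solution of the linear length ODE, at natural time t and parameters ys.
  The expressions u are evaluated in the environment f(t,y) @ h(t,y) @ [t] @ y.\<close>
fun ode_vec :: "pfun list \<Rightarrow> pfun list \<Rightarrow> sexpr list \<Rightarrow> nat \<Rightarrow> real list \<Rightarrow> real list option" where
  "ode_vec gs hs us 0 ys = those (map (\<lambda>g. g ys) gs)"
| "ode_vec gs hs us (Suc t) ys =
     (case ode_vec gs hs us t ys of
        None \<Rightarrow> None
      | Some fv \<Rightarrow>
          (case those (map (\<lambda>h. h (real t # ys)) hs) of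
             None \<Rightarrow> None
           | Some hv \<Rightarrow>
               Some (map (\<lambda>i. fv ! i + (real (blen (Suc t)) - real (blen t)) *
                                seval (fv @ hv @ [real t] @ ys) (us ! i))
                         [0..<length gs])))"

definition ode_sol :: "pfun list \<Rightarrow> pfun list \<Rightarrow> sexpr list \<Rightarrow> nat \<Rightarrow> pfun" where
  "ode_sol gs hs us i xs =
     (if is_nat_real (hd xs) then map_option (\<lambda>v. v ! i) (ode_vec gs hs us (nat \<lfloor>hd xs\<rfloor>) (tl xs))
      else None)"

text \<open>LDL: pairs (arity, partial function).\<close>
inductive_set LDL :: "(nat \<times> pfun) set" where
  zero: "(0, \<lambda>xs. Some 0) \<in> LDL"
| one: "(0, \<lambda>xs. Some 1) \<in> LDL"
| proj: "i < n \<Longrightarrow> (n, \<lambda>xs. Some (xs ! i)) \<in> LDL"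
| len: "(1, \<lambda>xs. if is_nat_real (xs ! 0) then Some (real (blen (nat \<lfloor>xs ! 0\<rfloor>))) else None) \<in> LDL"
| add: "(2, \<lambda>xs. Some (xs ! 0 + xs ! 1)) \<in> LDL"
| sub: "(2, \<lambda>xs. Some (xs ! 0 - xs ! 1)) \<in> LDL"
| mul: "(2, \<lambda>xs. Some (xs ! 0 * xs ! 1)) \<in> LDL"
| sg: "(1, \<lambda>xs. Some (sgbar (xs ! 0))) \<in> LDL"
| half: "(1, \<lambda>xs. Some (xs ! 0 / 2)) \<in> LDL"
| comp: "\<lbrakk> (m, f) \<in> LDL; length gs = m; \<forall>g\<in>set gs. (n, g) \<in> LDL \<rbrakk>
         \<Longrightarrow> (n, \<lambda>xs. case those (map (\<lambda>g. g xs) gs) of None \<Rightarrow> None | Some vs \<Rightarrow> f vs) \<in> LDL"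
| ode: "\<lbrakk> 0 < length gs; \<forall>g\<in>set gs. (k, g) \<in> LDL; \<forall>h\<in>set hs. (Suc k, h) \<in> LDL;
          length us = length gs;
          \<forall>u\<in>set us. ess_linear (length gs) u \<and>
                      svars u \<subseteq> {..<length gs + length hs + 1 + k};
          i < length gs \<rbrakk>
         \<Longrightarrow> (Suc k, ode_sol gs hs us i) \<in> LDL"

end

theory Submission
  imports Defs
begin

text \<open>
  After k steps the configuration is encoded by four reals: the state, the left tape as an
  octal word, the cells of the right tape visited so far as an octal word, and the untouched
  suffix of the input, still in the encoding gamma_word. One machine step is a map N on these
  reals whose components are sgbar-polynomials of degree at most one in the four coordinates,
  the table lookup being done with sgbar-indicators of the state and the scanned symbol.
  The linear length ODE with right-hand side N(f) - f applies N exactly when the binary length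
  of the time grows, so at time 2^T it has performed T machine steps. A second ODE of the same
  shape converts the octal visited part into gamma_word, and the output
  gamma_word vs + 4^-|vs| gamma_word u is assembled by composition.
\<close>

lemma blen_less_2 [simp]: "n < 2 \<Longrightarrow> blen n = 1"
  by (subst blen.simps) simp

lemma blen_ge_2: "2 \<le> n \<Longrightarrow> blen n = Suc (blen (n div 2))"
  by (subst blen.simps) simp

lemma blen_pos: "0 < blen n"
  by (subst blen.simps) simp

declare blen.simps [simp del]

lemma blen_power_2: "blen (2 ^ n) = Suc n"
  by (induction n) (simp_all add: blen_ge_2)

lemma blen_Suc_cases: "blen (Suc t) = blen t \<or> blen (Suc t) = Suc (blen t)"
proof (induction t rule: less_induct)
  case (less t)
  show ?case
  proof (cases "t < 2")
    case True
    then have "t = 0 \<or> t = 1" by auto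
    then show ?thesis by (auto simp: blen_ge_2)
  next
    case False
    have "Suc t div 2 = t div 2 \<or> Suc t div 2 = Suc (t div 2)" by presburger
    moreover have "blen (Suc (t div 2)) = blen (t div 2) \<or> blen (Suc (t div 2)) = Suc (blen (t div 2))"
      using False by (intro less) simp
    ultimately show ?thesis using False by (auto simp: blen_ge_2)
  qed
qed

fun lin_coeff :: "nat \<Rightarrow> nat \<Rightarrow> sexpr \<Rightarrow> sexpr" where
  "lin_coeff d j (SVar i) = SConst (if i = j then 1 else 0)"
| "lin_coeff d j (SConst c) = SConst 0"
| "lin_coeff d j (SAdd p q) = SAdd (lin_coeff d j p) (lin_coeff d j q)"
| "lin_coeff d j (SSub p q) = SSub (lin_coeff d j p) (lin_coeff d j q)"
| "lin_coeff d j (SMul p q) =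
     (if sdeg {..<d} p = 0 then SMul p (lin_coeff d j q) else SMul (lin_coeff d j p) q)"
| "lin_coeff d j (SSg p) = SConst 0"

fun lin_const :: "nat \<Rightarrow> sexpr \<Rightarrow> sexpr" where
  "lin_const d (SVar i) = (if i < d then SConst 0 else SVar i)"
| "lin_const d (SConst c) = SConst c"
| "lin_const d (SAdd p q) = SAdd (lin_const d p) (lin_const d q)"
| "lin_const d (SSub p q) = SSub (lin_const d p) (lin_const d q)"
| "lin_const d (SMul p q) =
     (if sdeg {..<d} p = 0 then SMul p (lin_const d q) else SMul (lin_const d p) q)"
| "lin_const d (SSg p) = SSg p"

lemma sdeg_lin_coeff: "sdeg {..<d} e \<le> 1 \<Longrightarrow> sdeg {..<d} (lin_coeff d j e) = 0"
  by (induction e) auto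

lemma sdeg_lin_const: "sdeg {..<d} e \<le> 1 \<Longrightarrow> sdeg {..<d} (lin_const d e) = 0"
  by (induction e) auto

lemma seval_lin_decomp:
  "sdeg {..<d} e \<le> 1 \<Longrightarrow>
     seval env e = (\<Sum>j<d. seval env (lin_coeff d j e) * env ! j) + seval env (lin_const d e)"
proof (induction e)
  case (SVar i)
  have "(\<Sum>j<d. seval env (lin_coeff d j (SVar i)) * env ! j) = (\<Sum>j<d. if i = j then env ! i else 0)"
    by (intro sum.cong) auto
  then show ?case by simp
next
  case (SMul p q)
  show ?case
  proof (cases "sdeg {..<d} p = 0")
    case True
    with SMul have "seval env q = (\<Sum>j<d. seval env (lin_coeff d j q) * env ! j) + seval env (lin_const d q)"
      by simp
    with True show ?thesis by (simp add: sum_distrib_left algebra_simps)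
  next
    case False
    with SMul have "seval env p = (\<Sum>j<d. seval env (lin_coeff d j p) * env ! j) + seval env (lin_const d p)"
      by simp
    with False show ?thesis by (simp add: sum_distrib_left sum_distrib_right algebra_simps)
  qed
qed (auto simp: sum.distrib sum_subtractf algebra_simps)

lemma ess_linear_if_sdeg_le_1: "sdeg {..<d} e \<le> 1 \<Longrightarrow> ess_linear d e"
  unfolding ess_linear_def
  by (intro exI[of _ "map (\<lambda>j. lin_coeff d j e) [0..<d]"] exI[of _ "lin_const d e"])
    (simp add: sdeg_lin_coeff sdeg_lin_const seval_lin_decomp)

lemma seval_cong: "(\<And>i. i \<in> svars e \<Longrightarrow> env ! i = env' ! i) \<Longrightarrow> seval env e = seval env' e"
  by (induction e) auto

fun ssum_list :: "sexpr list \<Rightarrow> sexpr" where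
  "ssum_list [] = SConst 0"
| "ssum_list (e # es) = SAdd e (ssum_list es)"

lemma seval_ssum_list: "seval env (ssum_list es) = (\<Sum>e\<leftarrow>es. seval env e)"
  by (induction es) auto

lemma sdeg_ssum_list_le: "(\<And>e. e \<in> set es \<Longrightarrow> sdeg F e \<le> k) \<Longrightarrow> sdeg F (ssum_list es) \<le> k"
  by (induction es) auto

lemma svars_ssum_list: "svars (ssum_list es) = (\<Union>e\<in>set es. svars e)"
  by (induction es) auto

section \<open>Length ODEs that jump at powers of two\<close>

text \<open>The constant c is the single h-function of
  the ODE: this is how a non-integer constant such as 1/8 enters N, as the variable after f.\<close>

definition jump_rhs :: "sexpr list \<Rightarrow> sexpr list" where
  "jump_rhs N = map (\<lambda>i. SSub (N ! i) (SVar i)) [0..<length N]"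

definition jump_map :: "sexpr list \<Rightarrow> real \<Rightarrow> real list \<Rightarrow> real list" where
  "jump_map N c v = map (seval (v @ [c])) N"

lemma length_jump_map_funpow:
  "length v = length N \<Longrightarrow> length ((jump_map N c ^^ k) v) = length N"
  by (induction k) (simp_all add: jump_map_def)

lemma ode_vec_jump:
  assumes vars: "\<forall>e\<in>set N. svars e \<subseteq> {..<Suc (length N)}"
    and init: "those (map (\<lambda>g. g ys) gs) = Some v0"
    and len: "length gs = length N" "length v0 = length N"
  shows "ode_vec gs [\<lambda>_. Some c] (jump_rhs N) t ys = Some ((jump_map N c ^^ (blen t - 1)) v0)"
proof (induction t)
  case 0
  show ?case using init by simp
next
  case (Suc t)
  define v where "v = (jump_map N c ^^ (blen t - 1)) v0"
  have lv: "length v = length N"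
    unfolding v_def using len(2) by (rule length_jump_map_funpow)
  have rhs: "seval (v @ [c] @ [real t] @ ys) (jump_rhs N ! i) = jump_map N c v ! i - v ! i"
    if "i < length N" for i
  proof -
    have "seval (v @ [c] @ [real t] @ ys) (N ! i) = seval (v @ [c]) (N ! i)"
    proof (rule seval_cong)
      fix x assume "x \<in> svars (N ! i)"
      then have "x < Suc (length v)" using vars that lv nth_mem by fastforce
      then show "(v @ [c] @ [real t] @ ys) ! x = (v @ [c]) ! x"
        by (cases "x < length v") (auto simp: nth_append)
    qed
    then show ?thesis using that lv by (simp add: jump_rhs_def jump_map_def nth_append)
  qed
  have step: "ode_vec gs [\<lambda>_. Some c] (jump_rhs N) (Suc t) ys =
      Some (map (\<lambda>i. v ! i + (real (blen (Suc t)) - real (blen t)) * (jump_map N c v ! i - v ! i))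
              [0..<length N])"
    using Suc.IH rhs by (simp add: v_def len)
  from blen_Suc_cases[of t] show ?case
  proof
    assume "blen (Suc t) = blen t"
    moreover have "map (\<lambda>i. v ! i) [0..<length N] = v"
      using lv map_nth by metis
    ultimately show ?thesis using step by (simp add: v_def)
  next
    assume jump: "blen (Suc t) = Suc (blen t)"
    have "map (\<lambda>i. jump_map N c v ! i) [0..<length N] = jump_map N c v"
      by (metis jump_map_def length_map map_nth)
    moreover have "(jump_map N c ^^ (blen (Suc t) - 1)) v0 = jump_map N c v"
      using jump blen_pos[of t] unfolding v_def by (metis Suc_pred' diff_Suc_1 comp_apply funpow.simps(2))
    ultimately show ?thesis using step jump by simp
  qed
qed

lemma ode_sol_nat: "ode_sol gs hs us i (real n # ys) = map_option (\<lambda>v. v ! i) (ode_vec gs hs us n ys)"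
  by (simp add: ode_sol_def is_nat_real_def)

lemma ode_sol_jump_power_2:
  assumes "\<forall>e\<in>set N. svars e \<subseteq> {..<Suc (length N)}"
    and "those (map (\<lambda>g. g ys) gs) = Some v0" "length gs = length N" "length v0 = length N"
  shows "ode_sol gs [\<lambda>_. Some c] (jump_rhs N) i (real (2 ^ T) # ys) = Some ((jump_map N c ^^ T) v0 ! i)"
  using ode_vec_jump[OF assms, where t = "2 ^ T"] ode_sol_nat[where n = "2 ^ T"]
  by (simp add: blen_power_2)

lemma LDL_jump_ode:
  assumes "0 < length N" "length gs = length N" "\<forall>g\<in>set gs. (k, g) \<in> LDL"
    and "(Suc k, \<lambda>_. Some c) \<in> LDL"
    and "\<forall>e\<in>set N. sdeg {..<length N} e \<le> 1" "\<forall>e\<in>set N. svars e \<subseteq> {..<Suc (length N)}"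
    and "i < length N"
  shows "(Suc k, ode_sol gs [\<lambda>_. Some c] (jump_rhs N) i) \<in> LDL"
proof (rule LDL.ode)
  show "\<forall>u\<in>set (jump_rhs N). ess_linear (length gs) u \<and>
      svars u \<subseteq> {..<length gs + length [\<lambda>_. Some c] + 1 + k}"
    using assms(2,5,6) by (fastforce simp: jump_rhs_def intro: ess_linear_if_sdeg_le_1)
qed (use assms in \<open>auto simp: jump_rhs_def\<close>)

section \<open>Encodings and digit extraction with sgbar\<close>

lemma gamma_word_Nil [simp]: "gamma_word [] = 0"
  by (simp add: gamma_word_def)

lemma gamma_word_Cons: "gamma_word (x # xs) = (real x + gamma_word xs) / 4"
proof -
  have "gamma_word (x # xs) = real x / 4 + (\<Sum>i<length xs. real (xs ! i) * (1/4) ^ (Suc i + 1))"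
    unfolding gamma_word_def length_Cons sum.lessThan_Suc_shift by simp
  also have "(\<Sum>i<length xs. real (xs ! i) * (1/4) ^ (Suc i + 1)) = gamma_word xs / 4"
    unfolding gamma_word_def by (simp add: sum_divide_distrib)
  finally show ?thesis by simp
qed

lemma gamma_word_bounds: "is_word u \<Longrightarrow> 0 \<le> gamma_word u \<and> gamma_word u < 1"
  by (induction u) (auto simp: is_word_def gamma_word_Cons)

lemma gamma_word_append: "gamma_word (xs @ ys) = gamma_word xs + (1/4) ^ length xs * gamma_word ys"
  by (induction xs) (auto simp: gamma_word_Cons algebra_simps)

lemma gamma_word_eq_sum_pad:
  assumes "length xs \<le> n"
  shows "gamma_word xs = (\<Sum>i<n. real (pad xs i) * (1/4) ^ (i + 1))"
proof -
  have "gamma_word xs = (\<Sum>i<length xs. real (pad xs i) * (1/4) ^ (i + 1))"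
    unfolding gamma_word_def pad_def by (rule sum.cong) auto
  also have "\<dots> = (\<Sum>i<n. real (pad xs i) * (1/4) ^ (i + 1))"
    using assms by (intro sum.mono_neutral_left) (auto simp: pad_def)
  finally show ?thesis .
qed

lemma gamma_word_pad_cong: "pad xs = pad ys \<Longrightarrow> gamma_word xs = gamma_word ys"
  using gamma_word_eq_sum_pad[of xs "max (length xs) (length ys)"]
    gamma_word_eq_sum_pad[of ys "max (length xs) (length ys)"]
  by simp

lemma sgbar_eq_0: "x \<le> 1/4 \<Longrightarrow> sgbar x = 0"
  by (simp add: sgbar_def)

lemma sgbar_eq_1: "3/4 \<le> x \<Longrightarrow> sgbar x = 1"
  by (simp add: sgbar_def)

text \<open>Tape symbols 0, 1, 3 become the octal digits 2, 4, 6, so that a nonempty word of blanks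
  has a nonzero code and thresholds of sgbar at 8v = 1, 3, 5 recover the leading digit.\<close>

definition oct_digit :: "nat \<Rightarrow> nat" where
  "oct_digit a = (if a = 0 then 2 else if a = 1 then 4 else 6)"

fun oct_word :: "nat list \<Rightarrow> real" where
  "oct_word [] = 0"
| "oct_word (x # xs) = (real (oct_digit x) + oct_word xs) / 8"

declare oct_word.simps(2) [simp del]

lemma oct_word_bounds: "0 \<le> oct_word xs \<and> oct_word xs < 1"
  by (induction xs) (auto simp: oct_word.simps oct_digit_def)

definition oct_nonempty :: "real \<Rightarrow> real" where
  "oct_nonempty v = sgbar (8 * v)"

definition oct_head :: "real \<Rightarrow> real" where
  "oct_head v = sgbar (8 * v - 3) + 2 * sgbar (8 * v - 5)"

definition oct_head_digit :: "real \<Rightarrow> real" where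
  "oct_head_digit v = 2 * (sgbar (8 * v) + sgbar (8 * v - 3) + sgbar (8 * v - 5))"

definition quad_head :: "real \<Rightarrow> real" where
  "quad_head r = sgbar (4 * r) + 2 * sgbar (4 * r - 2)"

lemma head_gadgets_zero [simp]: "oct_nonempty 0 = 0" "oct_head 0 = 0" "oct_head_digit 0 = 0" "quad_head 0 = 0"
  by (simp_all add: oct_nonempty_def oct_head_def oct_head_digit_def quad_head_def sgbar_eq_0)

lemma oct_gadgets_Cons:
  assumes "x \<in> {0, 1, 3}"
  shows "oct_nonempty (oct_word (x # xs)) = 1" "oct_head (oct_word (x # xs)) = real x"
    "oct_head_digit (oct_word (x # xs)) = real (oct_digit x)"
proof -
  have "0 \<le> oct_word xs" "oct_word xs < 1" using oct_word_bounds[of xs] by auto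
  moreover have "8 * oct_word (x # xs) = real (oct_digit x) + oct_word xs" by (simp add: oct_word.simps)
  ultimately show "oct_nonempty (oct_word (x # xs)) = 1" "oct_head (oct_word (x # xs)) = real x"
    "oct_head_digit (oct_word (x # xs)) = real (oct_digit x)"
    using assms
    by (auto simp: oct_nonempty_def oct_head_def oct_head_digit_def oct_digit_def sgbar_eq_0 sgbar_eq_1)
qed

lemma quad_head_gamma_word_Cons:
  assumes "is_word (y # ys)"
  shows "quad_head (gamma_word (y # ys)) = real y"
proof -
  have "0 \<le> gamma_word ys" "gamma_word ys < 1" "y \<in> {1, 3}"
    using assms gamma_word_bounds[of ys] by (auto simp: is_word_def)
  moreover have "4 * gamma_word (y # ys) = real y + gamma_word ys" by (simp add: gamma_word_Cons)
  ultimately show ?thesis by (auto simp: quad_head_def sgbar_eq_0 sgbar_eq_1)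
qed

definition oct_nonempty_expr :: "sexpr \<Rightarrow> sexpr" where
  "oct_nonempty_expr e = SSg (SMul (SConst 8) e)"

definition oct_head_expr :: "sexpr \<Rightarrow> sexpr" where
  "oct_head_expr e = SAdd (SSg (SSub (SMul (SConst 8) e) (SConst 3)))
     (SMul (SConst 2) (SSg (SSub (SMul (SConst 8) e) (SConst 5))))"

definition oct_head_digit_expr :: "sexpr \<Rightarrow> sexpr" where
  "oct_head_digit_expr e = SMul (SConst 2) (SAdd (SAdd (SSg (SMul (SConst 8) e))
     (SSg (SSub (SMul (SConst 8) e) (SConst 3)))) (SSg (SSub (SMul (SConst 8) e) (SConst 5))))"

definition quad_head_expr :: "sexpr \<Rightarrow> sexpr" where
  "quad_head_expr e = SAdd (SSg (SMul (SConst 4) e))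
     (SMul (SConst 2) (SSg (SSub (SMul (SConst 4) e) (SConst 2))))"

lemmas head_gadget_expr_defs =
  oct_nonempty_expr_def oct_head_expr_def oct_head_digit_expr_def quad_head_expr_def

lemma seval_head_gadget_exprs [simp]:
  "seval env (oct_nonempty_expr e) = oct_nonempty (seval env e)"
  "seval env (oct_head_expr e) = oct_head (seval env e)"
  "seval env (oct_head_digit_expr e) = oct_head_digit (seval env e)"
  "seval env (quad_head_expr e) = quad_head (seval env e)"
  by (simp_all add: head_gadget_expr_defs oct_nonempty_def oct_head_def oct_head_digit_def quad_head_def)

lemma sdeg_head_gadget_exprs [simp]:
  "sdeg F (oct_nonempty_expr e) = 0" "sdeg F (oct_head_expr e) = 0"
  "sdeg F (oct_head_digit_expr e) = 0" "sdeg F (quad_head_expr e) = 0"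
  by (simp_all add: head_gadget_expr_defs)

lemma svars_head_gadget_exprs [simp]:
  "svars (oct_nonempty_expr e) = svars e" "svars (oct_head_expr e) = svars e"
  "svars (oct_head_digit_expr e) = svars e" "svars (quad_head_expr e) = svars e"
  by (auto simp: head_gadget_expr_defs)

section \<open>One machine step as a jump map\<close>

lemma pad_Nil: "pad [] = (\<lambda>_. 0)"
  by (simp add: pad_def fun_eq_iff)

lemma pad_Cons: "pad (x # xs) = (\<lambda>i. if i = 0 then x else pad xs (i - 1))"
  by (auto simp: pad_def fun_eq_iff nth_Cons split: nat.split)

lemma pad_shift: "(\<lambda>i. pad xs (Suc i)) = pad (tl xs)"
  by (cases xs) (auto simp: pad_Cons pad_Nil)

lemma pad_in: "set xs \<subseteq> A \<Longrightarrow> 0 \<in> A \<Longrightarrow> pad xs i \<in> A"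
  by (auto simp: pad_def)

lemma pad_head_mem:
  "set vs \<subseteq> {0, 1, 3} \<Longrightarrow> is_word u \<Longrightarrow> pad (vs @ u) 0 \<in> {0, 1, 3}"
  by (rule pad_in) (auto simp: is_word_def)

fun tape_step :: "move \<Rightarrow> nat \<Rightarrow> nat list \<Rightarrow> nat list \<Rightarrow> nat list \<times> nat list" where
  "tape_step MStay a ls vs = (ls, a # tl vs)"
| "tape_step MRight a ls vs = (a # ls, tl vs)"
| "tape_step MLeft a ls vs = (tl ls, pad ls 0 # a # tl vs)"

lemma tape_step_in:
  assumes "tape_step m a ls vs = (ls', vs')" "set ls \<subseteq> A" "set vs \<subseteq> A" "a \<in> A" "0 \<in> A"
  shows "set ls' \<subseteq> A \<and> set vs' \<subseteq> A"
  using assms by (cases m; cases ls; cases vs) (auto simp: pad_Cons pad_Nil)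

lemma length_tape_step: "tape_step m a ls vs = (ls', vs') \<Longrightarrow> length vs' \<le> Suc (max 1 (length vs))"
  by (cases m) auto

lemma tm_step_pad:
  assumes "delta j (pad (vs @ u) 0) = (j', a, m)" and "tape_step m a ls vs = (ls', vs')"
  shows "tm_step delta (pad ls, j, pad (vs @ u)) = (pad ls', j', pad (vs' @ (if vs = [] then tl u else u)))"
proof -
  define u' where "u' = (if vs = [] then tl u else u)"
  have written: "(pad (vs @ u))(0 := a) = pad ((a # tl vs) @ u')"
    by (cases vs; cases u) (auto simp: u'_def pad_Cons pad_Nil fun_eq_iff)
  have "(\<lambda>i. pad (vs @ u) (Suc i)) = pad (tl vs @ u')"
    using arg_cong[OF written, of "\<lambda>r i. r (Suc i)"] pad_shift[of "(a # tl vs) @ u'"] by simp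
  with assms written show ?thesis
    by (cases m) (auto simp: u'_def pad_Cons pad_shift)
qed

definition sim_vec :: "nat \<Rightarrow> nat list \<Rightarrow> nat list \<Rightarrow> nat list \<Rightarrow> real list" where
  "sim_vec j ls vs u = [real j, oct_word ls, oct_word vs, gamma_word u]"

definition read_expr :: sexpr where
  "read_expr = SAdd (SMul (oct_nonempty_expr (SVar 2)) (oct_head_expr (SVar 2)))
     (SMul (SSub (SConst 1) (oct_nonempty_expr (SVar 2))) (quad_head_expr (SVar 3)))"

lemma seval_read_expr:
  assumes "set vs \<subseteq> {0, 1, 3}" "is_word u"
  shows "seval (sim_vec j ls vs u @ [c]) read_expr = real (pad (vs @ u) 0)"
proof (cases vs)
  case Nil
  with assms show ?thesis
    by (cases u) (simp_all add: read_expr_def sim_vec_def pad_Nil pad_Cons quad_head_gamma_word_Cons)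
next
  case (Cons x xs)
  with assms show ?thesis by (simp add: read_expr_def sim_vec_def pad_Cons oct_gadgets_Cons)
qed

definition state_is_expr :: "nat \<Rightarrow> sexpr" where
  "state_is_expr i = SSub (SSg (SAdd (SSub (SVar 0) (SConst (int i))) (SConst 1)))
     (SSg (SSub (SVar 0) (SConst (int i))))"

definition symbol_is_expr :: "nat \<Rightarrow> sexpr" where
  "symbol_is_expr \<sigma> =
     (if \<sigma> = 0 then SSub (SConst 1) (SSg read_expr)
      else if \<sigma> = 1 then SSub (SSg read_expr) (SSg (SSub read_expr (SConst 2)))
      else SSg (SSub read_expr (SConst 2)))"

lemma seval_state_is_expr:
  assumes "env ! 0 = real j"
  shows "seval env (state_is_expr i) = of_bool (i = j)"
proof -
  consider "i = j" | "i < j" | "j < i" by linarith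
  then show ?thesis
    by cases (use assms in \<open>auto simp: state_is_expr_def sgbar_eq_0 sgbar_eq_1\<close>)
qed

lemma seval_symbol_is_expr:
  assumes "seval env read_expr = real \<rho>" "\<rho> \<in> {0, 1, 3}" "\<sigma> \<in> {0, 1, 3}"
  shows "seval env (symbol_is_expr \<sigma>) = of_bool (\<sigma> = \<rho>)"
  using assms by (auto simp: symbol_is_expr_def sgbar_eq_0 sgbar_eq_1)

lemma sdeg_selector_exprs [simp]: "sdeg F (state_is_expr i) = 0" "sdeg F (symbol_is_expr \<sigma>) = 0"
  by (simp_all add: state_is_expr_def symbol_is_expr_def)

definition case_expr :: "nat \<Rightarrow> (nat \<Rightarrow> nat \<Rightarrow> sexpr) \<Rightarrow> sexpr" where
  "case_expr nQ X = ssum_list (map (\<lambda>i. SMul (state_is_expr i)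
     (ssum_list (map (\<lambda>\<sigma>. SMul (symbol_is_expr \<sigma>) (X i \<sigma>)) [0, 1, 3]))) [0..<nQ])"

lemma seval_case_expr:
  assumes "env ! 0 = real j" "j < nQ" "seval env read_expr = real \<sigma>" "\<sigma> \<in> {0, 1, 3}"
  shows "seval env (case_expr nQ X) = seval env (X j \<sigma>)"
proof -
  have "seval env (ssum_list (map (\<lambda>\<sigma>. SMul (symbol_is_expr \<sigma>) (X i \<sigma>)) [0, 1, 3])) = seval env (X i \<sigma>)"
    for i using assms(3,4) by (auto simp: seval_ssum_list seval_symbol_is_expr)
  then have "seval env (case_expr nQ X) = (\<Sum>i\<in>{0..<nQ}. of_bool (i = j) * seval env (X i \<sigma>))"
    by (simp add: case_expr_def seval_ssum_list seval_state_is_expr[OF assms(1)] o_def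
        sum_list_distinct_conv_sum_set)
  also have "\<dots> = seval env (X j \<sigma>)"
    using assms(2) by simp
  finally show ?thesis .
qed

lemma sdeg_case_expr_le: "(\<And>i \<sigma>. sdeg F (X i \<sigma>) \<le> 1) \<Longrightarrow> sdeg F (case_expr nQ X) \<le> 1"
  unfolding case_expr_def by (auto intro!: sdeg_ssum_list_le)

lemma svars_case_expr: "(\<And>i \<sigma>. svars (X i \<sigma>) \<subseteq> {..<5}) \<Longrightarrow> svars (case_expr nQ X) \<subseteq> {..<5}"
  unfolding case_expr_def svars_ssum_list
  by (auto simp: state_is_expr_def symbol_is_expr_def read_expr_def; blast)

definition write_expr :: "nat \<Rightarrow> sexpr" where
  "write_expr a = SAdd (SSub (SVar 2)
       (SMul (SMul (oct_nonempty_expr (SVar 2)) (oct_head_digit_expr (SVar 2))) (SVar 4)))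
     (SMul (SConst (int (oct_digit a))) (SVar 4))"

definition left_head_digit_expr :: sexpr where
  "left_head_digit_expr = SAdd (oct_head_digit_expr (SVar 1))
     (SMul (SConst 2) (SSub (SConst 1) (oct_nonempty_expr (SVar 1))))"

fun left_expr :: "move \<Rightarrow> nat \<Rightarrow> sexpr" where
  "left_expr MStay a = SVar 1"
| "left_expr MRight a = SAdd (SMul (SVar 1) (SVar 4)) (SMul (SConst (int (oct_digit a))) (SVar 4))"
| "left_expr MLeft a = SSub (SMul (SConst 8) (SVar 1)) (oct_head_digit_expr (SVar 1))"

fun visited_expr :: "move \<Rightarrow> nat \<Rightarrow> sexpr" where
  "visited_expr MStay a = write_expr a"
| "visited_expr MRight a = SSub (SMul (SConst 8) (write_expr a)) (SConst (int (oct_digit a)))"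
| "visited_expr MLeft a = SMul (SAdd (write_expr a) left_head_digit_expr) (SVar 4)"

definition rest_expr :: sexpr where
  "rest_expr = SAdd (SVar 3) (SMul (SSub (SConst 1) (oct_nonempty_expr (SVar 2)))
     (SSub (SMul (SConst 3) (SVar 3)) (quad_head_expr (SVar 3))))"

lemma seval_write_expr:
  assumes "set vs \<subseteq> {0, 1, 3}"
  shows "seval (sim_vec j ls vs u @ [1/8]) (write_expr a) = oct_word (a # tl vs)"
proof (cases vs)
  case (Cons x xs)
  with assms have "x \<in> {0, 1, 3}" by simp
  with Cons show ?thesis
    by (simp add: write_expr_def sim_vec_def oct_gadgets_Cons) (simp add: oct_word.simps field_simps)
qed (simp add: write_expr_def sim_vec_def oct_word.simps)

lemma seval_left_head_digit_expr:
  assumes "set ls \<subseteq> {0, 1, 3}"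
  shows "seval (sim_vec j ls vs u @ [c]) left_head_digit_expr = real (oct_digit (pad ls 0))"
  using assms
  by (cases ls) (auto simp: left_head_digit_expr_def sim_vec_def oct_gadgets_Cons pad_Nil pad_Cons oct_digit_def)

lemma seval_left_expr:
  assumes "set ls \<subseteq> {0, 1, 3}"
  shows "seval (sim_vec j ls vs u @ [1/8]) (left_expr m a) = oct_word (fst (tape_step m a ls vs))"
proof (cases "m = MLeft \<and> ls \<noteq> []")
  case True
  then obtain x xs where "m = MLeft" "ls = x # xs" by (auto simp: neq_Nil_conv)
  moreover from assms this(2) have "x \<in> {0, 1, 3}" by simp
  ultimately show ?thesis
    by (simp add: sim_vec_def oct_gadgets_Cons) (simp add: oct_word.simps field_simps)
next
  case False
  then show ?thesis by (cases m) (auto simp: sim_vec_def oct_word.simps)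
qed

lemma seval_visited_expr:
  assumes "set ls \<subseteq> {0, 1, 3}" "set vs \<subseteq> {0, 1, 3}"
  shows "seval (sim_vec j ls vs u @ [1/8]) (visited_expr m a) = oct_word (snd (tape_step m a ls vs))"
  using assms
  by (cases m; simp add: seval_write_expr seval_left_head_digit_expr;
      simp add: sim_vec_def oct_word.simps field_simps)

lemma seval_rest_expr:
  assumes "set vs \<subseteq> {0, 1, 3}" "is_word u"
  shows "seval (sim_vec j ls vs u @ [c]) rest_expr = gamma_word (if vs = [] then tl u else u)"
proof (cases vs)
  case Nil
  with assms show ?thesis
    by (cases u) (simp_all add: rest_expr_def sim_vec_def quad_head_gamma_word_Cons,
        simp add: gamma_word_Cons field_simps)
next
  case (Cons x xs)
  with assms show ?thesis by (simp add: rest_expr_def sim_vec_def oct_gadgets_Cons)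
qed

definition tm_step_exprs :: "nat \<Rightarrow> (nat \<Rightarrow> nat \<Rightarrow> nat \<times> nat \<times> move) \<Rightarrow> sexpr list" where
  "tm_step_exprs nQ delta =
     [case_expr nQ (\<lambda>i \<sigma>. SConst (int (fst (delta i \<sigma>)))),
      case_expr nQ (\<lambda>i \<sigma>. case delta i \<sigma> of (_, a, m) \<Rightarrow> left_expr m a),
      case_expr nQ (\<lambda>i \<sigma>. case delta i \<sigma> of (_, a, m) \<Rightarrow> visited_expr m a),
      rest_expr]"

lemma jump_map_tm_step_exprs:
  assumes "j < nQ" "set ls \<subseteq> {0, 1, 3}" "set vs \<subseteq> {0, 1, 3}" "is_word u"
    and "delta j (pad (vs @ u) 0) = (j', a, m)" "tape_step m a ls vs = (ls', vs')"
  shows "jump_map (tm_step_exprs nQ delta) (1/8) (sim_vec j ls vs u) =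
    sim_vec j' ls' vs' (if vs = [] then tl u else u)"
proof -
  let ?env = "sim_vec j ls vs u @ [1/8]"
  have "seval ?env (case_expr nQ X) = seval ?env (X j (pad (vs @ u) 0))" for X
    using assms(1) seval_read_expr[OF assms(3,4)] pad_head_mem[OF assms(3,4)]
    by (intro seval_case_expr) (simp_all add: sim_vec_def)
  with assms show ?thesis
    by (simp add: jump_map_def tm_step_exprs_def seval_left_expr seval_visited_expr seval_rest_expr)
      (simp add: sim_vec_def)
qed

lemma length_tm_step_exprs [simp]: "length (tm_step_exprs nQ delta) = 4"
  by (simp add: tm_step_exprs_def)

lemma sdeg_tm_step_exprs: "\<forall>e\<in>set (tm_step_exprs nQ delta). sdeg {..<4} e \<le> 1"
proof -
  have "sdeg {..<4} (left_expr m a) \<le> 1 \<and> sdeg {..<4} (visited_expr m a) \<le> 1" for m a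
    by (cases m) (simp_all add: write_expr_def left_head_digit_expr_def)
  then have "sdeg {..<4} (case_expr nQ (\<lambda>i \<sigma>. case delta i \<sigma> of (_, a, m) \<Rightarrow> left_expr m a)) \<le> 1"
    "sdeg {..<4} (case_expr nQ (\<lambda>i \<sigma>. case delta i \<sigma> of (_, a, m) \<Rightarrow> visited_expr m a)) \<le> 1"
    "sdeg {..<4} (case_expr nQ (\<lambda>i \<sigma>. SConst (int (fst (delta i \<sigma>))))) \<le> 1"
    by (intro sdeg_case_expr_le; simp split: prod.split)+
  then show ?thesis by (simp add: tm_step_exprs_def rest_expr_def)
qed

lemma svars_tm_step_exprs: "\<forall>e\<in>set (tm_step_exprs nQ delta). svars e \<subseteq> {..<5}"
proof -
  have "svars (left_expr m a) \<subseteq> {..<5} \<and> svars (visited_expr m a) \<subseteq> {..<5}" for m a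
    by (cases m) (auto simp: write_expr_def left_head_digit_expr_def)
  then have "svars (case_expr nQ (\<lambda>i \<sigma>. case delta i \<sigma> of (_, a, m) \<Rightarrow> left_expr m a)) \<subseteq> {..<5}"
    "svars (case_expr nQ (\<lambda>i \<sigma>. case delta i \<sigma> of (_, a, m) \<Rightarrow> visited_expr m a)) \<subseteq> {..<5}"
    "svars (case_expr nQ (\<lambda>i \<sigma>. SConst (int (fst (delta i \<sigma>))))) \<subseteq> {..<5}"
    by (intro svars_case_expr; simp split: prod.split)+
  then show ?thesis by (auto simp: tm_step_exprs_def rest_expr_def)
qed

text \<open>The head scans the first cell of vs @ u, where vs are the cells visited so far and u is the
  untouched rest of the input; each step adds at most one visited cell.\<close>

definition tm_sim :: "nat \<Rightarrow> nat \<Rightarrow> config \<Rightarrow> real list \<Rightarrow> bool" where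
  "tm_sim nQ k c v \<longleftrightarrow> (\<exists>j ls vs u. c = (pad ls, j, pad (vs @ u)) \<and> j < nQ \<and>
     set ls \<subseteq> {0, 1, 3} \<and> set vs \<subseteq> {0, 1, 3} \<and> is_word u \<and> length vs \<le> Suc k \<and>
     v = sim_vec j ls vs u)"

lemma tm_sim_step:
  assumes wf: "tm_wf nQ delta" and sim: "tm_sim nQ k c v"
  shows "tm_sim nQ (Suc k) (tm_step delta c) (jump_map (tm_step_exprs nQ delta) (1/8) v)"
proof -
  obtain j ls vs u where c: "c = (pad ls, j, pad (vs @ u))" and j: "j < nQ"
    and ls: "set ls \<subseteq> {0, 1, 3}" and vs: "set vs \<subseteq> {0, 1, 3}" and u: "is_word u"
    and len: "length vs \<le> Suc k" and v: "v = sim_vec j ls vs u"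
    using sim unfolding tm_sim_def by blast
  obtain j' a m where d: "delta j (pad (vs @ u) 0) = (j', a, m)"
    by (metis prod_cases3)
  obtain ls' vs' where ts: "tape_step m a ls vs = (ls', vs')"
    by fastforce
  have "j' < nQ" "a \<in> {0, 1, 3}"
    using wf j d pad_head_mem[OF vs u] unfolding tm_wf_def by (metis fst_conv snd_conv)+
  moreover have "set ls' \<subseteq> {0, 1, 3} \<and> set vs' \<subseteq> {0, 1, 3}"
    using tape_step_in[OF ts ls vs] \<open>a \<in> {0, 1, 3}\<close> by simp
  moreover have "length vs' \<le> Suc (Suc k)"
    using length_tape_step[OF ts] len by simp
  moreover have "is_word (if vs = [] then tl u else u)"
    using u by (cases u) (auto simp: is_word_def)
  ultimately show ?thesis
    using tm_step_pad[where delta = delta and j = j, OF d ts]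
      jump_map_tm_step_exprs[where delta = delta, OF j ls vs u d ts]
    unfolding tm_sim_def c v by blast
qed

lemma tm_sim_run:
  assumes "tm_wf nQ delta" "is_word w"
  shows "tm_sim nQ k ((tm_step delta ^^ k) (tm_init w))
    ((jump_map (tm_step_exprs nQ delta) (1/8) ^^ k) [0, 0, 0, gamma_word w])"
proof (induction k)
  case 0
  have "tm_init w = (pad [], 0, pad ([] @ w))"
    by (simp add: tm_init_def pad_Nil)
  with assms show ?case
    unfolding tm_sim_def tm_wf_def
    by (intro exI[of _ 0] exI[of _ "[]"] exI[of _ w]) (simp add: sim_vec_def)
next
  case (Suc k)
  then show ?case using tm_sim_step[OF assms(1)] by simp
qed

definition oct_to_quad_exprs :: "sexpr list" where
  "oct_to_quad_exprs =
     [SSub (SMul (SConst 8) (SVar 0)) (oct_head_digit_expr (SVar 0)),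
      SAdd (SVar 1) (SMul (SMul (oct_head_expr (SVar 0)) (SMul (SConst 2) (SVar 3))) (SVar 2)),
      SAdd (SVar 2) (SMul (SMul (oct_nonempty_expr (SVar 0)) (SSub (SMul (SConst 2) (SVar 3)) (SConst 1)))
        (SVar 2))]"

lemma jump_map_oct_to_quad_Nil: "jump_map oct_to_quad_exprs (1/8) [0, acc, p] = [0, acc, p]"
  by (simp add: jump_map_def oct_to_quad_exprs_def)

lemma jump_map_oct_to_quad_Cons:
  assumes "x \<in> {0, 1, 3}"
  shows "jump_map oct_to_quad_exprs (1/8) [oct_word (x # xs), acc, p] =
    [oct_word xs, acc + p * real x / 4, p / 4]"
  using assms
  by (simp add: jump_map_def oct_to_quad_exprs_def oct_gadgets_Cons) (simp add: oct_word.simps field_simps)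

lemma oct_to_quad_funpow:
  assumes "set vs \<subseteq> {0, 1, 3}" "length vs \<le> k"
  shows "(jump_map oct_to_quad_exprs (1/8) ^^ k) [oct_word vs, acc, p] =
    [0, acc + p * gamma_word vs, p * (1/4) ^ length vs]"
  using assms
proof (induction vs arbitrary: k acc p)
  case Nil
  show ?case by (induction k) (simp_all add: jump_map_oct_to_quad_Nil)
next
  case (Cons x xs)
  then obtain k' where "k = Suc k'" "length xs \<le> k'"
    by (cases k) auto
  with Cons show ?case
    by (simp add: funpow_Suc_right jump_map_oct_to_quad_Cons gamma_word_Cons field_simps
        del: funpow.simps)
qed

definition pcomp :: "pfun \<Rightarrow> pfun list \<Rightarrow> pfun" where
  "pcomp f gs = (\<lambda>xs. case those (map (\<lambda>g. g xs) gs) of None \<Rightarrow> None | Some vs \<Rightarrow> f vs)"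

lemma LDL_pcomp:
  "(m, f) \<in> LDL \<Longrightarrow> length gs = m \<Longrightarrow> \<forall>g\<in>set gs. (n, g) \<in> LDL \<Longrightarrow> (n, pcomp f gs) \<in> LDL"
  unfolding pcomp_def by (rule LDL.comp)

lemma pcomp_Some2: "g xs = Some a \<Longrightarrow> h xs = Some b \<Longrightarrow> pcomp f [g, h] xs = f [a, b]"
  by (simp add: pcomp_def)

lemma LDL_constant_lift: "(0, \<lambda>_. Some c) \<in> LDL \<Longrightarrow> (n, \<lambda>_. Some c) \<in> LDL"
  using LDL_pcomp[of 0 "\<lambda>_. Some c" "[]" n] by (simp add: pcomp_def)

lemma LDL_const_0: "(n, \<lambda>_. Some 0) \<in> LDL"
  by (rule LDL_constant_lift[OF LDL.zero])

lemma LDL_const_1: "(n, \<lambda>_. Some 1) \<in> LDL"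
  by (rule LDL_constant_lift[OF LDL.one])

lemma LDL_const_inverse_power_2: "(n, \<lambda>_. Some (1 / 2 ^ m)) \<in> LDL"
proof (induction m)
  case (Suc m)
  have "(n, pcomp (\<lambda>xs. Some (xs ! 0 / 2)) [\<lambda>_. Some (1 / 2 ^ m)]) \<in> LDL"
    using Suc by (intro LDL_pcomp[OF LDL.half]) auto
  then show ?case by (simp add: pcomp_def mult.commute)
qed (simp add: LDL_const_1)

lemma LDL_const_eighth: "(n, \<lambda>_. Some (1/8)) \<in> LDL"
  using LDL_const_inverse_power_2[of n 3] by simp

definition tm_ode :: "nat \<Rightarrow> (nat \<Rightarrow> nat \<Rightarrow> nat \<times> nat \<times> move) \<Rightarrow> nat \<Rightarrow> pfun" where
  "tm_ode nQ delta = ode_sol [\<lambda>_. Some 0, \<lambda>_. Some 0, \<lambda>_. Some 0, \<lambda>xs. Some (xs ! 0)]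
     [\<lambda>_. Some (1/8)] (jump_rhs (tm_step_exprs nQ delta))"

lemma tm_ode_power_2:
  "tm_ode nQ delta i [real (2 ^ n), y] =
     Some ((jump_map (tm_step_exprs nQ delta) (1/8) ^^ n) [0, 0, 0, y] ! i)"
  unfolding tm_ode_def by (rule ode_sol_jump_power_2) (use svars_tm_step_exprs in auto)

lemma LDL_tm_ode: "i < 4 \<Longrightarrow> (2, tm_ode nQ delta i) \<in> LDL"
  using LDL_jump_ode[of "tm_step_exprs nQ delta" _ 1 "1/8" i] sdeg_tm_step_exprs svars_tm_step_exprs
  by (simp add: tm_ode_def numeral_2_eq_2 LDL_const_0 LDL_const_eighth LDL.proj)

definition oct_to_quad_ode :: "nat \<Rightarrow> pfun" where
  "oct_to_quad_ode = ode_sol [\<lambda>xs. Some (xs ! 0), \<lambda>_. Some 0, \<lambda>_. Some 1]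
     [\<lambda>_. Some (1/8)] (jump_rhs oct_to_quad_exprs)"

lemma oct_to_quad_ode_power_2:
  assumes "set vs \<subseteq> {0, 1, 3}" "length vs \<le> n"
  shows "oct_to_quad_ode i [real (2 ^ n), oct_word vs] =
    Some ([0, gamma_word vs, (1/4) ^ length vs] ! i)"
proof -
  have "oct_to_quad_ode i [real (2 ^ n), oct_word vs] =
      Some ((jump_map oct_to_quad_exprs (1/8) ^^ n) [oct_word vs, 0, 1] ! i)"
    unfolding oct_to_quad_ode_def
    by (rule ode_sol_jump_power_2) (auto simp: oct_to_quad_exprs_def)
  with oct_to_quad_funpow[OF assms] show ?thesis by simp
qed

lemma LDL_oct_to_quad_ode: "i < 3 \<Longrightarrow> (2, oct_to_quad_ode i) \<in> LDL"
  using LDL_jump_ode[of oct_to_quad_exprs _ 1 "1/8" i]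
  by (simp add: oct_to_quad_ode_def oct_to_quad_exprs_def numeral_2_eq_2
      LDL_const_0 LDL_const_1 LDL_const_eighth LDL.proj)

text \<open>Time 2^(n+1) lets the converter take n + 1 digit steps, one per possible visited cell.\<close>

definition double_first :: pfun where
  "double_first = pcomp (\<lambda>xs. Some (xs ! 0 + xs ! 1)) [\<lambda>xs. Some (xs ! 0), \<lambda>xs. Some (xs ! 0)]"

definition tm_ldl :: "nat \<Rightarrow> (nat \<Rightarrow> nat \<Rightarrow> nat \<times> nat \<times> move) \<Rightarrow> pfun" where
  "tm_ldl nQ delta = pcomp (\<lambda>xs. Some (xs ! 0 + xs ! 1))
     [pcomp (oct_to_quad_ode 1) [double_first, tm_ode nQ delta 2],
      pcomp (\<lambda>xs. Some (xs ! 0 * xs ! 1))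
        [pcomp (oct_to_quad_ode 2) [double_first, tm_ode nQ delta 2], tm_ode nQ delta 3]]"

lemma LDL_tm_ldl: "(2, tm_ldl nQ delta) \<in> LDL"
proof -
  have double: "(2, double_first) \<in> LDL"
    unfolding double_first_def by (rule LDL_pcomp[OF LDL.add]) (auto intro: LDL.proj)
  have conv: "(2, pcomp (oct_to_quad_ode i) [double_first, tm_ode nQ delta 2]) \<in> LDL" if "i < 3" for i
    using that by (intro LDL_pcomp[OF LDL_oct_to_quad_ode]) (auto simp: double LDL_tm_ode)
  have "(2, pcomp (\<lambda>xs. Some (xs ! 0 * xs ! 1))
      [pcomp (oct_to_quad_ode 2) [double_first, tm_ode nQ delta 2], tm_ode nQ delta 3]) \<in> LDL"
    by (rule LDL_pcomp[OF LDL.mul]) (auto simp: conv LDL_tm_ode)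
  with conv[of 1] show ?thesis
    unfolding tm_ldl_def by (intro LDL_pcomp[OF LDL.add]) auto
qed

lemma tm_ldl_eval:
  assumes "(jump_map (tm_step_exprs nQ delta) (1/8) ^^ n) [0, 0, 0, y] = sim_vec j ls vs u"
    and "set vs \<subseteq> {0, 1, 3}" "length vs \<le> Suc n"
  shows "tm_ldl nQ delta [real (2 ^ n), y] = Some (gamma_word (vs @ u))"
proof -
  let ?x = "[real (2 ^ n), y]"
  have "double_first ?x = Some (real (2 ^ Suc n))"
    by (simp add: double_first_def pcomp_def)
  moreover have "tm_ode nQ delta 2 ?x = Some (oct_word vs)" "tm_ode nQ delta 3 ?x = Some (gamma_word u)"
    using assms(1) tm_ode_power_2[of nQ delta 2 n y] tm_ode_power_2[of nQ delta 3 n y]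
    by (simp_all add: sim_vec_def)
  moreover have "oct_to_quad_ode 1 [real (2 ^ Suc n), oct_word vs] = Some (gamma_word vs)"
    "oct_to_quad_ode 2 [real (2 ^ Suc n), oct_word vs] = Some ((1/4) ^ length vs)"
    using oct_to_quad_ode_power_2[OF assms(2,3)] by simp_all
  ultimately show ?thesis
    by (simp only: tm_ldl_def pcomp_Some2 list.sel nth_Cons_0 nth_Cons_Suc gamma_word_append
        One_nat_def)
qed

theorem mainTheorem9:
  fixes nQ :: nat and delta :: "nat \<Rightarrow> nat \<Rightarrow> nat \<times> nat \<times> move"
    and f :: "nat list \<Rightarrow> nat list" and T :: "nat \<Rightarrow> nat"
  assumes "tm_wf nQ delta"
    and "tm_computes delta f T"
  shows "\<exists>F. (2, F) \<in> LDL \<and>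
           (\<forall>w. is_word w \<longrightarrow>
              F [real (2 ^ T (length w)), gamma_word w] = Some (gamma_word (f w)))"
proof (intro exI[of _ "tm_ldl nQ delta"] conjI allI impI)
  show "(2, tm_ldl nQ delta) \<in> LDL"
    by (rule LDL_tm_ldl)
  fix w assume w: "is_word w"
  let ?n = "T (length w)"
  obtain j ls vs u where run: "(tm_step delta ^^ ?n) (tm_init w) = (pad ls, j, pad (vs @ u))"
    and vs: "set vs \<subseteq> {0, 1, 3}" "length vs \<le> Suc ?n"
    and sim: "(jump_map (tm_step_exprs nQ delta) (1/8) ^^ ?n) [0, 0, 0, gamma_word w] = sim_vec j ls vs u"
    using tm_sim_run[OF assms(1) w] unfolding tm_sim_def by blast
  have "pad (vs @ u) = pad (f w)"
    using assms(2) w run unfolding tm_computes_def Let_def by (metis snd_conv)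
  then show "tm_ldl nQ delta [real (2 ^ ?n), gamma_word w] = Some (gamma_word (f w))"
    using tm_ldl_eval[OF sim vs] gamma_word_pad_cong by metis
qed

end
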